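(* There is a function $C_5(t)$ such that for every positive integer $t$ the following holds: every connected bipartite graph $G$ with $\delta(G)\geq C_5(t)$ which is induced $S_{t,t}$-free has diameter at most $5$.
   Context: For positive integers $a,b$, the biclaw $S_{a,b}$ is the graph with vertex set $\{x,x_1,\dots,x_a,y,y_1,\dots,y_b\}$ and edges $xy$, $xy_1,\dots,xy_b$, $yx_1,\dots,yx_a$. Induced $S_{t,t}$-free means no induced subgraph isomorphic to $S_{t,t}$. $\delta(G)$ is the minimum degree. *)

theory Defs
  imports Main
begin

definition simple_graph :: "'a set \<Rightarrow> ('a \<Rightarrow> 'a \<Rightarrow> bool) \<Rightarrow> bool" where
  "simple_graph V E \<longleftrightarrow> finite V \<and> (\<forall>u v. E u v \<longrightarrow> u \<in> V \<and> v \<in> V)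
     \<and> (\<forall>u v. E u v \<longrightarrow> E v u) \<and> (\<forall>v. \<not> E v v)"

definition degree :: "'a set \<Rightarrow> ('a \<Rightarrow> 'a \<Rightarrow> bool) \<Rightarrow> 'a \<Rightarrow> nat" where
  "degree V E v = card {u \<in> V. E v u}"

definition min_degree_ge :: "'a set \<Rightarrow> ('a \<Rightarrow> 'a \<Rightarrow> bool) \<Rightarrow> nat \<Rightarrow> bool" where
  "min_degree_ge V E k \<longleftrightarrow> (\<forall>v\<in>V. k \<le> degree V E v)"

text \<open>A walk of length (length ps - 1) from u to v.\<close>
definition is_walk :: "('a \<Rightarrow> 'a \<Rightarrow> bool) \<Rightarrow> 'a list \<Rightarrow> 'a \<Rightarrow> 'a \<Rightarrow> bool" where
  "is_walk E ps u v \<longleftrightarrow> ps \<noteq> [] \<and> hd ps = u \<and> last ps = v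
     \<and> (\<forall>i. Suc i < length ps \<longrightarrow> E (ps ! i) (ps ! Suc i))"

definition connected_graph :: "'a set \<Rightarrow> ('a \<Rightarrow> 'a \<Rightarrow> bool) \<Rightarrow> bool" where
  "connected_graph V E \<longleftrightarrow> V \<noteq> {} \<and> (\<forall>u\<in>V. \<forall>v\<in>V. \<exists>ps. is_walk E ps u v)"

definition bipartite :: "'a set \<Rightarrow> ('a \<Rightarrow> 'a \<Rightarrow> bool) \<Rightarrow> bool" where
  "bipartite V E \<longleftrightarrow> (\<exists>A \<subseteq> V. \<forall>u v. E u v \<longrightarrow> (u \<in> A \<longleftrightarrow> v \<notin> A))"

definition diameter_le :: "'a set \<Rightarrow> ('a \<Rightarrow> 'a \<Rightarrow> bool) \<Rightarrow> nat \<Rightarrow> bool" where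
  "diameter_le V E d \<longleftrightarrow> (\<forall>u\<in>V. \<forall>v\<in>V. \<exists>ps. is_walk E ps u v \<and> length ps \<le> Suc d)"

text \<open>Biclaw S_{a,b}: vertices x, y, x_1..x_a (BXi 0..a-1), y_1..y_b (BYi 0..b-1).\<close>
datatype bcv = BX | BY | BXi nat | BYi nat

definition biclaw_V :: "nat \<Rightarrow> nat \<Rightarrow> bcv set" where
  "biclaw_V a b = {BX, BY} \<union> BXi ` {..<a} \<union> BYi ` {..<b}"

fun biclaw_E0 :: "bcv \<Rightarrow> bcv \<Rightarrow> bool" where
  "biclaw_E0 BX BY = True"
| "biclaw_E0 BX (BYi _) = True"
| "biclaw_E0 BY (BXi _) = True"
| "biclaw_E0 _ _ = False"

definition biclaw_E :: "bcv \<Rightarrow> bcv \<Rightarrow> bool" where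
  "biclaw_E u v \<longleftrightarrow> biclaw_E0 u v \<or> biclaw_E0 v u"

definition induced_subgraph_of :: "'b set \<Rightarrow> ('b \<Rightarrow> 'b \<Rightarrow> bool) \<Rightarrow> 'a set \<Rightarrow> ('a \<Rightarrow> 'a \<Rightarrow> bool) \<Rightarrow> bool" where
  "induced_subgraph_of HV HE V E \<longleftrightarrow> (\<exists>f. inj_on f HV \<and> f ` HV \<subseteq> V
     \<and> (\<forall>u\<in>HV. \<forall>v\<in>HV. E (f u) (f v) \<longleftrightarrow> HE u v))"

definition induced_biclaw_free :: "nat \<Rightarrow> 'a set \<Rightarrow> ('a \<Rightarrow> 'a \<Rightarrow> bool) \<Rightarrow> bool" where
  "induced_biclaw_free t V E \<longleftrightarrow> \<not> induced_subgraph_of (biclaw_V t t) biclaw_E V E"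

end

theory Submission
  imports Defs
begin

(* Measured from a root r, every neighbour of a vertex z of a connected bipartite graph lies
   one level below z (down r z) or one level above it (up r z).  If x y is an edge, then t
   neighbours of y and t neighbours of x with no edges between them span, together with x and y,
   an induced S_{t,t}.  Hence, when y is one level above x, down r x or up r y has fewer than
   t elements.  Together with the minimum degree 2 t^2 + 4 t this local rule propagates from
   the root: most neighbours of a level-1 vertex have large down-degree, and a level-2 vertex
   has fewer than t level-3 neighbours of large up-degree.  If two vertices r, r' were at
   distance 6, a vertex y at distance 3 from both would have small down-degree towards either
   root; counting around a level-2 neighbour of y then yields a vertex at distance 3 from both
   roots whose up- and down-degree towards r are both below t, contradicting the degree bound.
   So no two vertices are at distance 6, and hence none at distance more than 5. *)

lemma relpowp_iff_walk:
  "(E ^^ n) u v \<longleftrightarrow> (\<exists>ps. is_walk E ps u v \<and> length ps = Suc n)"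
proof
  assume "(E ^^ n) u v"
  then obtain f where f: "f 0 = u" "f n = v" "\<forall>i<n. E (f i) (f (Suc i))"
    unfolding relpowp_fun_conv by blast
  have "is_walk E (map f [0..<Suc n]) u v"
    using f by (auto simp: is_walk_def hd_map last_map simp del: upt_Suc)
  then show "\<exists>ps. is_walk E ps u v \<and> length ps = Suc n" by fastforce
next
  assume "\<exists>ps. is_walk E ps u v \<and> length ps = Suc n"
  then obtain ps where ps: "is_walk E ps u v" "length ps = Suc n" by blast
  then have "ps ! 0 = u" "ps ! n = v"
    by (auto simp: is_walk_def hd_conv_nth last_conv_nth)
  with ps show "(E ^^ n) u v"
    unfolding relpowp_fun_conv is_walk_def by (metis Suc_mono)
qed

lemma card_le_card_Un:
  "finite (B \<union> C) \<Longrightarrow> A \<subseteq> B \<union> C \<Longrightarrow> card A \<le> card B + card C"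
  by (meson card_Un_le card_mono le_trans)

lemma biclaw_V_iff [simp]:
  "BX \<in> biclaw_V a b" "BY \<in> biclaw_V a b"
  "BXi i \<in> biclaw_V a b \<longleftrightarrow> i < a" "BYi i \<in> biclaw_V a b \<longleftrightarrow> i < b"
  by (auto simp: biclaw_V_def)

locale bipartite_graph =
  fixes V :: "'a set" and E :: "'a \<Rightarrow> 'a \<Rightarrow> bool" and A :: "'a set"
  assumes simple: "simple_graph V E"
    and sides: "E a b \<Longrightarrow> a \<in> A \<longleftrightarrow> b \<notin> A"
begin

definition nbhd :: "'a \<Rightarrow> 'a set" where
  "nbhd z = {a. E z a}"

lemma finite_V: "finite V"
  and edge_in_V: "E a b \<Longrightarrow> a \<in> V" "E a b \<Longrightarrow> b \<in> V"
  and edge_sym: "E a b \<Longrightarrow> E b a"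
  and no_loop: "\<not> E a a"
  using simple by (auto simp: simple_graph_def)

lemma mem_nbhd [simp]: "a \<in> nbhd z \<longleftrightarrow> E z a"
  by (simp add: nbhd_def)

lemma nbhd_subset_V: "nbhd z \<subseteq> V"
  using edge_in_V by auto

lemma finite_nbhd [simp]: "finite (nbhd z)"
  using finite_subset[OF nbhd_subset_V finite_V] .

lemma finite_adjacent [simp]: "finite {a. E z a \<and> P a}"
  by (rule finite_subset[OF _ finite_nbhd[of z]]) auto

lemma degree_eq_card_nbhd: "degree V E z = card (nbhd z)"
  unfolding degree_def nbhd_def using edge_in_V by metis

lemma nbhd_independent: "a \<in> nbhd z \<Longrightarrow> b \<in> nbhd z \<Longrightarrow> \<not> E a b"
  by (metis mem_nbhd sides)

lemma relpowp_swap: "(E ^^ n) u v \<Longrightarrow> (E ^^ n) v u"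
proof (induction n arbitrary: v)
  case (Suc n)
  then obtain w where "(E ^^ n) u w" "E w v" by (auto elim: relpowp_Suc_E)
  then show ?case using Suc.IH by (blast intro: relpowp_Suc_I2 edge_sym)
qed simp

lemma relpowp_same_side_iff_even: "(E ^^ n) u v \<Longrightarrow> (u \<in> A \<longleftrightarrow> v \<in> A) \<longleftrightarrow> even n"
proof (induction n arbitrary: v)
  case (Suc n)
  then show ?case by (auto elim!: relpowp_Suc_E dest: sides)
qed simp

lemma nbhd_disjoint: "E x y \<Longrightarrow> nbhd x \<inter> nbhd y = {}"
  by (metis disjoint_iff edge_sym mem_nbhd nbhd_independent)

lemma induced_biclaw_embedding:
  assumes xy: "E x y"
    and fx: "inj_on fx {..<t}" "fx ` {..<t} \<subseteq> nbhd y - {x}"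
    and fy: "inj_on fy {..<t}" "fy ` {..<t} \<subseteq> nbhd x - {y}"
    and anticomplete: "\<And>i j. i < t \<Longrightarrow> j < t \<Longrightarrow> \<not> E (fx i) (fy j)"
  shows "induced_subgraph_of (biclaw_V t t) biclaw_E V E"
proof -
  define f where "f v = (case v of BX \<Rightarrow> x | BY \<Rightarrow> y | BXi i \<Rightarrow> fx i | BYi i \<Rightarrow> fy i)" for v
  have x_side: "x \<in> nbhd y" "i < t \<Longrightarrow> fx i \<in> nbhd y" for i
    using edge_sym[OF xy] fx(2) by auto
  have y_side: "y \<in> nbhd x" "i < t \<Longrightarrow> fy i \<in> nbhd x" for i
    using xy fy(2) by auto
  have distinct: "x \<noteq> y" "i < t \<Longrightarrow> fx i \<notin> {x, y}" "i < t \<Longrightarrow> fy i \<notin> {x, y}"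
    "i < t \<Longrightarrow> j < t \<Longrightarrow> fx i \<noteq> fy j" for i j
    using xy x_side y_side fx(2) fy(2) no_loop nbhd_disjoint[OF xy] by blast+
  have inj: "i < t \<Longrightarrow> j < t \<Longrightarrow> fx i = fx j \<longleftrightarrow> i = j" "i < t \<Longrightarrow> j < t \<Longrightarrow> fy i = fy j \<longleftrightarrow> i = j"
    for i j
    using fx(1) fy(1) by (auto simp: inj_on_def)
  have adj: "E y (fx i)" "E x (fy i)" if "i < t" for i
    using x_side(2)[OF that] y_side(2)[OF that] by simp_all
  have indep: "\<not> E x (fx i)" "\<not> E (fx i) x" "\<not> E y (fy i)" "\<not> E (fy i) y"
    "j < t \<Longrightarrow> \<not> E (fx i) (fx j)" "j < t \<Longrightarrow> \<not> E (fy i) (fy j)"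
    "j < t \<Longrightarrow> \<not> E (fy j) (fx i)" if "i < t" for i j
    using nbhd_independent x_side y_side anticomplete edge_sym that by blast+
  show ?thesis
    unfolding induced_subgraph_of_def
  proof (intro exI conjI)
    show "inj_on f (biclaw_V t t)"
    proof (rule inj_onI)
      fix u v assume "u \<in> biclaw_V t t" "v \<in> biclaw_V t t" "f u = f v"
      then show "u = v"
        using distinct inj by (cases u; cases v) (force simp: f_def)+
    qed
    show "f ` biclaw_V t t \<subseteq> V"
      using edge_in_V[OF xy] x_side(2)[THEN subsetD[OF nbhd_subset_V]]
        y_side(2)[THEN subsetD[OF nbhd_subset_V]]
      by (auto simp: biclaw_V_def f_def)
    show "\<forall>u\<in>biclaw_V t t. \<forall>v\<in>biclaw_V t t. E (f u) (f v) = biclaw_E u v"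
    proof (intro ballI)
      fix u v assume "u \<in> biclaw_V t t" "v \<in> biclaw_V t t"
      then show "E (f u) (f v) = biclaw_E u v"
        using xy edge_sym[OF xy] adj adj[THEN edge_sym] anticomplete indep no_loop
        by (cases u; cases v) (simp_all add: f_def biclaw_E_def)
    qed
  qed
qed

lemma induced_biclaw:
  assumes xy: "E x y"
    and X: "X \<subseteq> nbhd y - {x}" "card X = t"
    and Y: "Y \<subseteq> nbhd x - {y}" "card Y = t"
    and anticomplete: "\<forall>a\<in>X. \<forall>b\<in>Y. \<not> E a b"
  shows "induced_subgraph_of (biclaw_V t t) biclaw_E V E"
proof -
  obtain fx where fx: "bij_betw fx {..<t} X"
    using ex_bij_betw_nat_finite[of X] X finite_subset[of X "nbhd y"]
    by (auto simp: atLeast0LessThan)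
  obtain fy where fy: "bij_betw fy {..<t} Y"
    using ex_bij_betw_nat_finite[of Y] Y finite_subset[of Y "nbhd x"]
    by (auto simp: atLeast0LessThan)
  show ?thesis
  proof (rule induced_biclaw_embedding[OF xy])
    show "inj_on fx {..<t}" "fx ` {..<t} \<subseteq> nbhd y - {x}"
      "inj_on fy {..<t}" "fy ` {..<t} \<subseteq> nbhd x - {y}"
      using fx fy X Y by (auto simp: bij_betw_def)
    show "\<not> E (fx i) (fy j)" if "i < t" "j < t" for i j
      using anticomplete fx fy that by (auto simp: bij_betw_def)
  qed
qed

end

locale connected_bipartite_graph = bipartite_graph +
  assumes connected: "connected_graph V E"
begin

definition dist :: "'a \<Rightarrow> 'a \<Rightarrow> nat" where
  "dist u v = (LEAST n. (E ^^ n) u v)"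

lemma reachable: "u \<in> V \<Longrightarrow> v \<in> V \<Longrightarrow> \<exists>n. (E ^^ n) u v"
  using connected unfolding connected_graph_def relpowp_iff_walk is_walk_def
  by (metis Suc_pred length_greater_0_conv)

lemma relpowp_dist: "u \<in> V \<Longrightarrow> v \<in> V \<Longrightarrow> (E ^^ dist u v) u v"
  unfolding dist_def using reachable by (metis LeastI)

lemma dist_le: "(E ^^ n) u v \<Longrightarrow> dist u v \<le> n"
  unfolding dist_def by (rule Least_le)

lemma relpowp_in_V: "(E ^^ n) u v \<Longrightarrow> u \<in> V \<Longrightarrow> v \<in> V"
  by (cases n) (auto elim: relpowp_Suc_E intro: edge_in_V)

lemma dist_eq_0_iff: "u \<in> V \<Longrightarrow> v \<in> V \<Longrightarrow> dist u v = 0 \<longleftrightarrow> u = v"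
  using relpowp_dist[of u v] dist_le[of 0 u u] by auto

lemma dist_sym: "u \<in> V \<Longrightarrow> v \<in> V \<Longrightarrow> dist u v = dist v u"
  using dist_le[OF relpowp_swap[OF relpowp_dist[of u v]]] dist_le[OF relpowp_swap[OF relpowp_dist[of v u]]]
  by simp

lemma dist_triangle: "u \<in> V \<Longrightarrow> v \<in> V \<Longrightarrow> w \<in> V \<Longrightarrow> dist u w \<le> dist u v + dist v w"
  using dist_le[OF relpowp_trans[OF relpowp_dist[of u v] relpowp_dist[of v w]]] .

lemma dist_edge:
  assumes r: "r \<in> V" and ab: "E a b"
  shows "dist r b = dist r a + 1 \<or> dist r a = dist r b + 1"
proof -
  have walks: "(E ^^ dist r a) r a" "(E ^^ dist r b) r b"
    using relpowp_dist r edge_in_V ab by blast+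
  have "dist r b \<le> dist r a + 1" "dist r a \<le> dist r b + 1"
    using walks ab edge_sym by (auto intro!: dist_le intro: relpowp_Suc_I)
  moreover have "dist r a \<noteq> dist r b"
    using walks[THEN relpowp_same_side_iff_even] sides[OF ab] by metis
  ultimately show ?thesis by linarith
qed

lemma dist_1_iff:
  assumes "r \<in> V" "a \<in> V"
  shows "dist r a = 1 \<longleftrightarrow> E r a"
proof
  show "dist r a = 1 \<Longrightarrow> E r a"
    using relpowp_dist[OF assms] by (metis relpowp_1)
  assume "E r a"
  then have "dist r a \<le> 1" "dist r a \<noteq> 0"
    using dist_le[of 1 r a] dist_eq_0_iff[OF assms] no_loop by auto
  then show "dist r a = 1" by simp
qed

lemma dist_2_if_edge:
  assumes "r \<in> V" "E r g" "E g h" "h \<noteq> r"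
  shows "dist r h = 2"
proof -
  have "dist r g = 1" "h \<in> V"
    using dist_1_iff[of r g] edge_in_V assms by auto
  then show ?thesis
    using dist_edge[of r g h] dist_eq_0_iff[of r h] assms by auto
qed

lemma dist_between:
  assumes r: "r \<in> V" and z: "z \<in> V" and m: "m \<le> dist r z"
  shows "\<exists>y\<in>V. dist r y = m \<and> dist y z = dist r z - m"
proof -
  have "(E ^^ (m + (dist r z - m))) r z"
    using relpowp_dist[OF r z] m by simp
  then obtain y where ry: "(E ^^ m) r y" and yz: "(E ^^ (dist r z - m)) y z"
    unfolding relpowp_add by blast
  have y: "y \<in> V"
    using relpowp_in_V[OF ry r] .
  have "dist r y = m \<and> dist y z = dist r z - m"
    using dist_le[OF ry] dist_le[OF yz] dist_triangle[OF r y z] m by linarith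
  with y show ?thesis by blast
qed

lemma obtain_closer_neighbour:
  assumes "r \<in> V" "z \<in> V" "dist r z = Suc n"
  obtains x where "E z x" "dist r x = n"
proof -
  obtain x where "x \<in> V" "dist r x = n" "dist x z = 1"
    using dist_between[of r z n] assms by auto
  then show thesis
    using that dist_1_iff[of x z] edge_sym assms by blast
qed

definition down :: "'a \<Rightarrow> 'a \<Rightarrow> 'a set" where
  "down r z = {a \<in> nbhd z. dist r a + 1 = dist r z}"

definition up :: "'a \<Rightarrow> 'a \<Rightarrow> 'a set" where
  "up r z = {a \<in> nbhd z. dist r a = dist r z + 1}"

lemma down_subset_nbhd: "down r z \<subseteq> nbhd z" and up_subset_nbhd: "up r z \<subseteq> nbhd z"
  by (auto simp: down_def up_def)

lemma finite_down [simp]: "finite (down r z)" and finite_up [simp]: "finite (up r z)"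
  using finite_subset[OF down_subset_nbhd] finite_subset[OF up_subset_nbhd] by auto

lemma nbhd_eq_down_Un_up: "r \<in> V \<Longrightarrow> nbhd z = down r z \<union> up r z"
  by (auto simp: down_def up_def dest: dist_edge)

lemma card_nbhd_le_down_up: "r \<in> V \<Longrightarrow> card (nbhd z) \<le> card (down r z) + card (up r z)"
  by (metis card_Un_le nbhd_eq_down_Un_up)

lemma nbhd_subset_up_Un_up:
  assumes r: "r \<in> V" "r' \<in> V" and z: "z \<in> V"
    and geodesic: "dist r r' = dist r z + dist r' z"
  shows "nbhd z \<subseteq> up r z \<union> up r' z"
proof
  fix a assume "a \<in> nbhd z"
  then have a: "E z a" "a \<in> V" using edge_in_V by auto
  have "dist r r' \<le> dist r a + dist r' a"
    using dist_triangle[OF r(1) a(2) r(2)] dist_sym[OF a(2) r(2)] by simp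
  then show "a \<in> up r z \<union> up r' z"
    using dist_edge[OF r(1) a(1)] dist_edge[OF r(2) a(1)] geodesic a by (auto simp: up_def)
qed

definition is_midpoint :: "'a \<Rightarrow> 'a \<Rightarrow> 'a \<Rightarrow> bool" where
  "is_midpoint r r' y \<longleftrightarrow> r \<in> V \<and> r' \<in> V \<and> y \<in> V \<and> dist r r' = 6 \<and> dist r y = 3 \<and> dist r' y = 3"

lemma is_midpoint_sym: "is_midpoint r r' y \<Longrightarrow> is_midpoint r' r y"
  by (auto simp: is_midpoint_def dist_sym)

lemma midpoint_nbhd_subset: "is_midpoint r r' y \<Longrightarrow> nbhd y \<subseteq> up r y \<union> up r' y"
  unfolding is_midpoint_def by (intro nbhd_subset_up_Un_up) auto

lemma midpoint_nbhd_dist: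
  assumes mid: "is_midpoint r r' y" and q: "E y q" "dist r' q = 2"
  shows "dist r q = 4"
  using midpoint_nbhd_subset[OF mid] q mid by (auto simp: up_def is_midpoint_def)

end

locale biclaw_free_bipartite_graph = bipartite_graph +
  fixes t :: nat
  assumes biclaw_free: "induced_biclaw_free t V E"
begin

lemma anticomplete_card_lt:
  assumes xy: "E x y" and X: "X \<subseteq> nbhd y - {x}" and Y: "Y \<subseteq> nbhd x - {y}"
    and anticomplete: "\<forall>a\<in>X. \<forall>b\<in>Y. \<not> E a b"
  shows "card X < t \<or> card Y < t"
proof (rule ccontr)
  assume "\<not> (card X < t \<or> card Y < t)"
  then obtain X' Y' where "X' \<subseteq> X" "card X' = t" "Y' \<subseteq> Y" "card Y' = t"
    by (meson not_less obtain_subset_with_card_n)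
  then have "induced_subgraph_of (biclaw_V t t) biclaw_E V E"
    using induced_biclaw[OF xy, of X' t Y'] X Y anticomplete by blast
  then show False
    using biclaw_free by (simp add: induced_biclaw_free_def)
qed

(* The vertices of S without a neighbour in T are fewer than t by anticomplete_card_lt;
   each of the others lies in some nbhd z with z in T. *)
lemma card_lt_if_few_adjacent:
  assumes xy: "E x y" and S: "S \<subseteq> nbhd x - {y}" and T: "T \<subseteq> nbhd y - {x}" "t \<le> card T"
    and few: "\<And>z. z \<in> T \<Longrightarrow> card (nbhd z \<inter> S) \<le> k"
  shows "card S < t + card T * k"
proof -
  define S\<^sub>0 where "S\<^sub>0 = {s \<in> S. \<forall>z\<in>T. \<not> E z s}"
  have "S\<^sub>0 \<subseteq> nbhd x - {y}" "\<forall>a\<in>T. \<forall>b\<in>S\<^sub>0. \<not> E a b"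
    using S unfolding S\<^sub>0_def by blast+
  then have "card S\<^sub>0 < t"
    using anticomplete_card_lt[OF xy T(1)] T(2) by fastforce
  have "S = S\<^sub>0 \<union> (\<Union>z\<in>T. nbhd z \<inter> S)"
    unfolding S\<^sub>0_def by auto
  then have "card S \<le> card S\<^sub>0 + card (\<Union>z\<in>T. nbhd z \<inter> S)"
    by (metis card_Un_le)
  also have "card (\<Union>z\<in>T. nbhd z \<inter> S) \<le> (\<Sum>z\<in>T. card (nbhd z \<inter> S))"
    by (rule card_UN_le[OF finite_subset[OF T(1)]]) simp
  also have "(\<Sum>z\<in>T. card (nbhd z \<inter> S)) \<le> card T * k"
    using sum_bounded_above[of T "\<lambda>z. card (nbhd z \<inter> S)" k] few by simp
  finally show ?thesis
    using \<open>card S\<^sub>0 < t\<close> by linarith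
qed

end

locale dense_biclaw_free_graph =
  connected_bipartite_graph V E A + biclaw_free_bipartite_graph V E A t
  for V :: "'a set" and E A t +
  fixes C :: nat
  assumes min_degree: "min_degree_ge V E C"
    and large_degree: "2 * (t * t) + 4 * t \<le> C"
begin

lemma C_le_card_nbhd: "z \<in> V \<Longrightarrow> C \<le> card (nbhd z)"
  using min_degree by (simp add: min_degree_ge_def degree_eq_card_nbhd)

lemma C_le_card_down_up: "r \<in> V \<Longrightarrow> z \<in> V \<Longrightarrow> C \<le> card (down r z) + card (up r z)"
  using C_le_card_nbhd card_nbhd_le_down_up le_trans by blast

(* up r y and down r x lie three levels apart, so no edge joins them. *)
lemma down_or_up_card_lt:
  assumes r: "r \<in> V" and xy: "E x y" and dy: "dist r y = dist r x + 1"
  shows "card (down r x) < t \<or> card (up r y) < t"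
proof -
  have "card (up r y) < t \<or> card (down r x) < t"
  proof (rule anticomplete_card_lt[OF xy])
    show "up r y \<subseteq> nbhd y - {x}" "down r x \<subseteq> nbhd x - {y}"
      using dy by (auto simp: up_def down_def)
    show "\<forall>a\<in>up r y. \<forall>b\<in>down r x. \<not> E a b"
    proof (intro ballI notI)
      fix a b assume "a \<in> up r y" "b \<in> down r x" "E a b"
      then show False
        using dist_edge[OF r \<open>E a b\<close>] dy by (auto simp: up_def down_def)
    qed
  qed
  then show ?thesis by blast
qed

lemma card_small_down_lt:
  assumes r: "r \<in> V" and rg: "E r g"
  shows "card {z \<in> nbhd g - {r}. card (down r z) < t} < t"
proof (rule ccontr)
  assume "\<not> ?thesis"
  then obtain T where T: "T \<subseteq> {z \<in> nbhd g - {r}. card (down r z) < t}" "card T = t"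
    by (meson not_less obtain_subset_with_card_n)
  have "card (nbhd r - {g}) < t + card T * t"
  proof (rule card_lt_if_few_adjacent[OF rg])
    show "nbhd r - {g} \<subseteq> nbhd r - {g}" "T \<subseteq> nbhd g - {r}" "t \<le> card T"
      using T by auto
    fix z assume "z \<in> T"
    then have z: "E g z" "z \<noteq> r" "card (down r z) < t"
      using T(1) by auto
    have "nbhd z \<inter> (nbhd r - {g}) \<subseteq> down r z"
    proof
      fix a assume "a \<in> nbhd z \<inter> (nbhd r - {g})"
      then have "E z a" "E r a" by auto
      then have "dist r a = 1"
        using dist_1_iff[OF r] edge_in_V by blast
      then show "a \<in> down r z"
        using dist_2_if_edge[OF r rg z(1,2)] \<open>E z a\<close> by (simp add: down_def)
    qed
    then show "card (nbhd z \<inter> (nbhd r - {g})) \<le> t"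
      using card_mono[OF finite_down] z(3) by (meson le_trans less_imp_le)
  qed
  moreover have "card (nbhd r) \<le> card (nbhd r - {g}) + card {g}"
    by (rule card_le_card_Un) auto
  ultimately show False
    using C_le_card_nbhd[OF r] large_degree T(2) by simp
qed

lemma card_large_up_lt:
  assumes r: "r \<in> V" and s: "s \<in> V" "dist r s = 2"
  shows "card {z \<in> nbhd s. dist r z = 3 \<and> t \<le> card (up r z)} < t"
    (is "card ?Z < t")
proof -
  have "dist r s = Suc 1"
    using s(2) by simp
  then obtain g where sg: "E s g" and "dist r g = 1"
    using obtain_closer_neighbour[OF r s(1)] by blast
  moreover have g: "g \<in> V"
    using edge_in_V(2)[OF sg] .
  ultimately have rg: "E r g"
    using dist_1_iff[OF r g] by simp
  define H where "H = {h \<in> nbhd g - {r, s}. t \<le> card (down r h)}"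
  define B where "B = {z \<in> nbhd g - {r}. card (down r z) < t}"
  have "nbhd g \<subseteq> (H \<union> B) \<union> {r, s}"
    by (auto simp: H_def B_def)
  then have "card (nbhd g) \<le> card (H \<union> B) + card {r, s}"
    by (rule card_le_card_Un[rotated]) (simp add: H_def B_def)
  moreover have "card (H \<union> B) \<le> card H + card B" "card {r, s} \<le> 2"
    by (simp_all add: card_Un_le card_insert_if)
  moreover have "card B < t"
    unfolding B_def using card_small_down_lt[OF r rg] .
  ultimately have "t \<le> card H"
    using C_le_card_nbhd[OF g] large_degree by linarith
  moreover have "card H < t \<or> card ?Z < t"
  proof (rule anticomplete_card_lt[OF sg])
    show "H \<subseteq> nbhd g - {s}" "?Z \<subseteq> nbhd s - {g}"
      using \<open>dist r g = 1\<close> by (auto simp: H_def)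
    show "\<forall>a\<in>H. \<forall>b\<in>?Z. \<not> E a b"
    proof (intro ballI notI)
      fix a b assume a: "a \<in> H" and b: "b \<in> ?Z" and ab: "E a b"
      have "dist r a = 2"
        using dist_2_if_edge[OF r rg] a by (auto simp: H_def)
      then show False
        using down_or_up_card_lt[OF r ab] a b by (auto simp: H_def)
    qed
  qed
  ultimately show ?thesis by linarith
qed

lemma C_le_card_up_up:
  assumes mid: "is_midpoint r r' y"
  shows "C \<le> card (up r y) + card (up r' y)"
proof -
  have "card (nbhd y) \<le> card (up r y) + card (up r' y)"
    by (rule card_le_card_Un) (simp_all add: midpoint_nbhd_subset[OF mid])
  then show ?thesis
    using C_le_card_nbhd mid by (fastforce simp: is_midpoint_def)
qed

lemma card_common_nbhd_level3_lt:
  assumes r: "r \<in> V" "r' \<in> V" "dist r r' = 6"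
    and s: "s \<in> V" "dist r s = 2" and q: "q \<in> V" "dist r q = 4" "dist r' q = 2"
  shows "card {z \<in> nbhd s \<inter> nbhd q. dist r' z = 3} < 2 * t"
proof -
  define P where "P = {z \<in> nbhd s. dist r z = 3 \<and> t \<le> card (up r z)}"
  define P' where "P' = {z \<in> nbhd q. dist r' z = 3 \<and> t \<le> card (up r' z)}"
  have "{z \<in> nbhd s \<inter> nbhd q. dist r' z = 3} \<subseteq> P \<union> P'"
  proof
    fix z assume "z \<in> {z \<in> nbhd s \<inter> nbhd q. dist r' z = 3}"
    then have z: "E s z" "E q z" "dist r' z = 3" by auto
    have "dist r z = 3"
      using dist_edge[OF r(1) z(1)] dist_edge[OF r(1) z(2)] s q by auto
    then have "is_midpoint r r' z"
      using r z edge_in_V by (auto simp: is_midpoint_def)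
    then have "t \<le> card (up r z) \<or> t \<le> card (up r' z)"
      using C_le_card_up_up large_degree by fastforce
    then show "z \<in> P \<union> P'"
      using z \<open>dist r z = 3\<close> by (auto simp: P_def P'_def)
  qed
  then have "card {z \<in> nbhd s \<inter> nbhd q. dist r' z = 3} \<le> card P + card P'"
    by (rule card_le_card_Un[rotated]) (simp add: P_def P'_def)
  moreover have "card P < t" "card P' < t"
    unfolding P_def P'_def using card_large_up_lt r s q by blast+
  ultimately show ?thesis by linarith
qed

lemma card_level3_nbhd_lt:
  assumes mid: "is_midpoint r r' y" and large: "t \<le> card (down r y)"
    and q: "E y q" "dist r' q = 2"
  shows "card {z \<in> nbhd q - {y}. dist r' z = 3} < t + 2 * (t * t)"
proof -
  have r: "r \<in> V" "r' \<in> V" "dist r r' = 6" and y: "dist r y = 3"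
    using mid by (auto simp: is_midpoint_def)
  have q4: "dist r q = 4" and qV: "q \<in> V"
    using midpoint_nbhd_dist[OF mid q] edge_in_V(2)[OF q(1)] .
  obtain T where T: "T \<subseteq> down r y" "card T = t"
    using large by (meson obtain_subset_with_card_n)
  have "card {z \<in> nbhd q - {y}. dist r' z = 3} < t + card T * (2 * t)"
  proof (rule card_lt_if_few_adjacent[OF edge_sym[OF q(1)]])
    show "{z \<in> nbhd q - {y}. dist r' z = 3} \<subseteq> nbhd q - {y}" "t \<le> card T"
      using T by auto
    show "T \<subseteq> nbhd y - {q}"
      using T q4 y by (auto simp: down_def)
    fix s assume "s \<in> T"
    then have s: "E y s" "dist r s = 2"
      using T(1) y by (auto simp: down_def)
    have "card (nbhd s \<inter> {z \<in> nbhd q - {y}. dist r' z = 3})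
        \<le> card {z \<in> nbhd s \<inter> nbhd q. dist r' z = 3}"
      by (rule card_mono) auto
    then show "card (nbhd s \<inter> {z \<in> nbhd q - {y}. dist r' z = 3}) \<le> 2 * t"
      using card_common_nbhd_level3_lt[OF r edge_in_V(2)[OF s(1)] s(2) qV q4 q(2)] by linarith
  qed
  then show ?thesis
    using T(2) by (simp add: mult.left_commute)
qed

lemma midpoint_up_card_lt:
  assumes mid: "is_midpoint r r' y" and large: "t \<le> card (down r y)"
  shows "card (up r' y) < t"
proof -
  have r': "r' \<in> V" and y: "y \<in> V" "dist r' y = Suc 2"
    using mid by (auto simp: is_midpoint_def)
  obtain q where q: "E y q" "dist r' q = 2"
    using obtain_closer_neighbour[OF r' y] .
  have qV: "q \<in> V"
    using edge_in_V(2)[OF q(1)] .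
  have "up r' q \<subseteq> {z \<in> nbhd q - {y}. dist r' z = 3} \<union> {y}"
    using q by (auto simp: up_def)
  then have "card (up r' q) \<le> card {z \<in> nbhd q - {y}. dist r' z = 3} + card {y}"
    by (rule card_le_card_Un[rotated]) simp
  moreover have "card {y} = 1"
    by simp
  ultimately have "t \<le> card (down r' q)"
    using card_level3_nbhd_lt[OF mid large q] C_le_card_down_up[OF r' qV] large_degree by linarith
  moreover have "dist r' y = dist r' q + 1"
    using q y by simp
  ultimately show ?thesis
    using down_or_up_card_lt[OF r' edge_sym[OF q(1)]] by linarith
qed

lemma midpoint_down_card_lt:
  assumes mid: "is_midpoint r r' y"
  shows "card (down r y) < t"
proof (rule ccontr)
  have "r' \<in> V" "y \<in> V"
    using mid by (auto simp: is_midpoint_def)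
  assume "\<not> ?thesis"
  then have "card (up r' y) < t"
    using midpoint_up_card_lt[OF mid] by simp
  then have "t \<le> card (down r' y)"
    using C_le_card_down_up[OF \<open>r' \<in> V\<close> \<open>y \<in> V\<close>] large_degree by linarith
  then have "card (up r y) < t"
    using midpoint_up_card_lt[OF is_midpoint_sym[OF mid]] by simp
  then show False
    using C_le_card_up_up[OF mid] \<open>card (up r' y) < t\<close> large_degree by linarith
qed

lemma card_small_up_ge:
  assumes r: "r \<in> V" and q: "q \<in> V" "dist r q = 2" and small: "card (down r q) < t"
  shows "t \<le> card {z \<in> nbhd q - {y}. dist r z = 3 \<and> card (up r z) < t}"
    (is "t \<le> card ?W")
proof -
  define P where "P = {z \<in> nbhd q. dist r z = 3 \<and> t \<le> card (up r z)}"
  have "up r q \<subseteq> (?W \<union> P) \<union> {y}"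
    using q by (auto simp: up_def P_def)
  then have "card (up r q) \<le> card (?W \<union> P) + card {y}"
    by (rule card_le_card_Un[rotated]) (simp add: P_def)
  moreover have "card (?W \<union> P) \<le> card ?W + card P" "card {y} = 1"
    by (simp_all add: card_Un_le)
  moreover have "card P < t"
    unfolding P_def using card_large_up_lt[OF r q] .
  ultimately show ?thesis
    using C_le_card_down_up[OF r q(1)] small large_degree by linarith
qed

lemma midpoint_card_far_large_up_lt:
  assumes mid: "is_midpoint r r' y"
  shows "card {z \<in> nbhd y. dist r' z = 4 \<and> t \<le> card (up r' z)} < t"
    (is "card ?Z < t")
proof -
  have r': "r' \<in> V" and y: "y \<in> V" "dist r' y = Suc 2"
    using mid by (auto simp: is_midpoint_def)
  obtain q where q: "E y q" "dist r' q = 2"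
    using obtain_closer_neighbour[OF r' y] .
  have qV: "q \<in> V" and qy: "dist r' y = dist r' q + 1"
    using edge_in_V(2)[OF q(1)] q y by auto
  have "card (down r' y) < t"
    using midpoint_down_card_lt[OF is_midpoint_sym[OF mid]] .
  then have "t \<le> card (up r' y)"
    using C_le_card_down_up[OF r' y(1)] large_degree by linarith
  then have "card (down r' q) < t"
    using down_or_up_card_lt[OF r' edge_sym[OF q(1)] qy] by linarith
  define W where "W = {z \<in> nbhd q - {y}. dist r' z = 3 \<and> card (up r' z) < t}"
  have "card W < t \<or> card ?Z < t"
  proof (rule anticomplete_card_lt[OF q(1)])
    show "W \<subseteq> nbhd q - {y}" "?Z \<subseteq> nbhd y - {q}"
      using q by (auto simp: W_def)
    show "\<forall>a\<in>W. \<forall>b\<in>?Z. \<not> E a b"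
    proof (intro ballI notI)
      fix a b assume a: "a \<in> W" and b: "b \<in> ?Z" and ab: "E a b"
      then have "card (down r' a) < t"
        using down_or_up_card_lt[OF r' ab] by (auto simp: W_def)
      then show False
        using C_le_card_down_up[OF r' edge_in_V(1)[OF ab]] a large_degree by (auto simp: W_def)
    qed
  qed
  then show ?thesis
    using card_small_up_ge[OF r' qV q(2) \<open>card (down r' q) < t\<close>, of y] by (simp add: W_def)
qed

lemma midpoint_card_far_small_up_ge:
  assumes mid: "is_midpoint r r' y"
  shows "t \<le> card {z \<in> nbhd y. dist r z = 4 \<and> dist r' z = 4 \<and> card (up r' z) < t}"
    (is "t \<le> card ?R")
proof -
  have r: "r \<in> V" "r' \<in> V" and y: "y \<in> V" "dist r y = 3" "dist r' y = 3"
    using mid by (auto simp: is_midpoint_def)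
  let ?Z = "{z \<in> nbhd y. dist r' z = 4 \<and> t \<le> card (up r' z)}"
  have "nbhd y \<subseteq> down r y \<union> down r' y \<union> ?Z \<union> ?R"
  proof
    fix a assume "a \<in> nbhd y"
    then show "a \<in> down r y \<union> down r' y \<union> ?Z \<union> ?R"
      using dist_edge[OF r(1), of y a] dist_edge[OF r(2), of y a] y by (auto simp: down_def)
  qed
  then have "card (nbhd y) \<le> card (down r y \<union> down r' y \<union> ?Z \<union> ?R)"
    by (rule card_mono[rotated]) simp
  also have "\<dots> \<le> card (down r y) + card (down r' y) + card ?Z + card ?R"
    using card_Un_le[of "down r y \<union> down r' y \<union> ?Z" ?R] card_Un_le[of "down r y \<union> down r' y" ?Z]
      card_Un_le[of "down r y" "down r' y"] by linarith
  finally show ?thesis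
    using C_le_card_nbhd[OF y(1)] midpoint_down_card_lt[OF mid]
      midpoint_down_card_lt[OF is_midpoint_sym[OF mid]] midpoint_card_far_large_up_lt[OF mid]
      large_degree by linarith
qed

lemma midpoint_card_extreme_lt:
  assumes mid: "is_midpoint r r' y" and s: "E y s" "dist r s = 2"
  shows "card {a \<in> nbhd s. dist r a = 1 \<or> dist r' a = 5} < t + t * t"
proof -
  have r: "r \<in> V" "r' \<in> V" and y: "dist r y = 3" "dist r' y = 3"
    using mid by (auto simp: is_midpoint_def)
  obtain T where T: "T \<subseteq> {z \<in> nbhd y. dist r z = 4 \<and> dist r' z = 4 \<and> card (up r' z) < t}"
    "card T = t"
    using midpoint_card_far_small_up_ge[OF mid] by (meson obtain_subset_with_card_n)
  have "card {a \<in> nbhd s. dist r a = 1 \<or> dist r' a = 5} < t + card T * t"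
  proof (rule card_lt_if_few_adjacent[OF edge_sym[OF s(1)]])
    show "{a \<in> nbhd s. dist r a = 1 \<or> dist r' a = 5} \<subseteq> nbhd s - {y}"
      using y by auto
    show "T \<subseteq> nbhd y - {s}" "t \<le> card T"
      using T s by auto
    fix z assume "z \<in> T"
    then have z: "E y z" "dist r z = 4" "dist r' z = 4" "card (up r' z) < t"
      using T(1) by auto
    have "nbhd z \<inter> {a \<in> nbhd s. dist r a = 1 \<or> dist r' a = 5} \<subseteq> up r' z"
    proof
      fix a assume "a \<in> nbhd z \<inter> {a \<in> nbhd s. dist r a = 1 \<or> dist r' a = 5}"
      then show "a \<in> up r' z"
        using dist_edge[OF r(1), of z a] z by (auto simp: up_def)
    qed
    then show "card (nbhd z \<inter> {a \<in> nbhd s. dist r a = 1 \<or> dist r' a = 5}) \<le> t"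
      using card_mono[OF finite_up] z(4) by (meson le_trans less_imp_le)
  qed
  then show ?thesis
    using T(2) by simp
qed

lemma midpoint_obtain_balanced:
  assumes mid: "is_midpoint r r' y" and s: "E y s" "dist r s = 2"
  obtains z where "E s z" "dist r z = 3" "dist r' z = 3" "card (up r z) < t"
proof -
  have r: "r \<in> V" "r' \<in> V"
    using mid by (auto simp: is_midpoint_def)
  have sV: "s \<in> V" and s4: "dist r' s = 4"
    using edge_in_V(2)[OF s(1)] midpoint_nbhd_dist[OF is_midpoint_sym[OF mid] s] .
  define G where "G = {a \<in> nbhd s. dist r a = 3 \<and> dist r' a = 3}"
  define P where "P = {z \<in> nbhd s. dist r z = 3 \<and> t \<le> card (up r z)}"
  have "nbhd s \<subseteq> {a \<in> nbhd s. dist r a = 1 \<or> dist r' a = 5} \<union> G"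
  proof
    fix a assume "a \<in> nbhd s"
    then show "a \<in> {a \<in> nbhd s. dist r a = 1 \<or> dist r' a = 5} \<union> G"
      using dist_edge[OF r(1), of s a] dist_edge[OF r(2), of s a] s s4 by (auto simp: G_def)
  qed
  then have "card (nbhd s) \<le> card {a \<in> nbhd s. dist r a = 1 \<or> dist r' a = 5} + card G"
    by (rule card_le_card_Un[rotated]) (simp add: G_def)
  moreover have "card P < t"
    unfolding P_def using card_large_up_lt[OF r(1) sV s(2)] .
  ultimately have "card P < card G"
    using midpoint_card_extreme_lt[OF mid s] C_le_card_nbhd[OF sV] large_degree by linarith
  moreover have "G \<subseteq> P \<Longrightarrow> card G \<le> card P"
    by (rule card_mono) (simp add: P_def)
  ultimately obtain z where "z \<in> G" "z \<notin> P"
    by auto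
  then show thesis
    using that by (auto simp: G_def P_def)
qed

lemma no_midpoint: "\<not> is_midpoint r r' y"
proof
  assume mid: "is_midpoint r r' y"
  have r: "r \<in> V" "r' \<in> V" "dist r r' = 6" and y: "y \<in> V" "dist r y = Suc 2"
    using mid by (auto simp: is_midpoint_def)
  obtain s where "E y s" "dist r s = 2"
    using obtain_closer_neighbour[OF r(1) y] .
  then obtain z where z: "E s z" "dist r z = 3" "dist r' z = 3" "card (up r z) < t"
    using midpoint_obtain_balanced[OF mid] by blast
  have zV: "z \<in> V"
    using edge_in_V(2)[OF z(1)] .
  have "card (down r z) < t"
    using midpoint_down_card_lt r zV z by (simp add: is_midpoint_def)
  then show False
    using C_le_card_down_up[OF r(1) zV] z(4) large_degree by linarith
qed

lemma dist_ne_6: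
  assumes r: "r \<in> V" "r' \<in> V"
  shows "dist r r' \<noteq> 6"
proof
  assume "dist r r' = 6"
  then obtain y where "y \<in> V" "dist r y = 3" "dist y r' = 3"
    using dist_between[OF r, of 3] by auto
  then have "is_midpoint r r' y"
    using r \<open>dist r r' = 6\<close> dist_sym by (simp add: is_midpoint_def)
  then show False
    using no_midpoint by blast
qed

lemma dist_le_5:
  assumes "u \<in> V" "v \<in> V"
  shows "dist u v \<le> 5"
proof (rule ccontr)
  assume "\<not> ?thesis"
  then have "6 \<le> dist u v"
    by simp
  then obtain w where "w \<in> V" "dist u w = 6"
    using dist_between[OF assms] by blast
  then show False
    using dist_ne_6[OF assms(1)] by blast
qed

lemma diameter_le_5: "diameter_le V E 5"
  unfolding diameter_le_def
proof (intro ballI)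
  fix u v assume "u \<in> V" "v \<in> V"
  then obtain ps where "is_walk E ps u v" "length ps = Suc (dist u v)"
    using relpowp_dist[of u v] unfolding relpowp_iff_walk by blast
  then show "\<exists>ps. is_walk E ps u v \<and> length ps \<le> Suc 5"
    using dist_le_5[OF \<open>u \<in> V\<close> \<open>v \<in> V\<close>] by auto
qed

end

lemma diameter_le_5_if_biclaw_free:
  assumes "simple_graph V E" "connected_graph V E" "bipartite V E"
    and "min_degree_ge V E (2 * (t * t) + 4 * t)" "induced_biclaw_free t V E"
  shows "diameter_le V E 5"
proof -
  obtain A where "\<forall>u v. E u v \<longrightarrow> (u \<in> A \<longleftrightarrow> v \<notin> A)"
    using assms(3) unfolding bipartite_def by blast
  then interpret dense_biclaw_free_graph V E A t "2 * (t * t) + 4 * t"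
    using assms by unfold_locales blast+
  show ?thesis
    by (rule diameter_le_5)
qed

(* The argument also covers t = 0. *)
theorem mainTheorem8:
  shows "\<exists>C5 :: nat \<Rightarrow> nat. \<forall>t::nat. t > 0 \<longrightarrow>
    (\<forall>(V :: nat set) E. simple_graph V E \<and> connected_graph V E \<and> bipartite V E
       \<and> min_degree_ge V E (C5 t) \<and> induced_biclaw_free t V E
       \<longrightarrow> diameter_le V E 5)"
  using diameter_le_5_if_biclaw_free by (intro exI[of _ "\<lambda>t. 2 * (t * t) + 4 * t"]) blast

end
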